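(* Let $\sigma_t:\mathcal{M}_t\to\mathcal{P}_t$, $t=0,\dots,T+1$, be functions such that $\Pi_t=\sigma_t(M_t)$ is an information state at each $t=0,\dots,T$. Then for all $t=0,\dots,T$, all $m_t\in[[M_t]]$ and all $u_t\in[[U_t]]$, $$Q_t(m_t,u_t)=\bar{Q}_t\big(\sigma_t(m_t),u_t\big)\quad\text{and}\quad V_t(m_t)=\bar{V}_t\big(\sigma_t(m_t)\big).$$
   Context: Uncertain variables: fix a sample space $\Omega$; an uncertain variable with values in a set $\mathcal{X}$ is a map $X:\Omega\to\mathcal{X}$, with marginal range $[[X]]:=\{X(\omega):\omega\in\Omega\}$; uncertain variables are independent if their joint range is the product of their marginal ranges. System: horizon $T\in\mathbb{N}$. For $t=0,\dots,T$ there are independent disturbances $W_t\in\mathcal{W}_t$, actions $U_t\in\mathcal{U}_t$ taking values in a given set $[[U_t]]\subseteq\mathcal{U}_t$, observations $Y_0=h_0(W_0)$, $Y_{t+1}=h_{t+1}(W_{0:t},U_{0:t})$, and costs $C_t=d_t(W_{0:t},U_{0:t})\in\mathcal{C}_t\subset\mathbb{R}_{\ge0}$. The sets $\mathcal{U}_t,\mathcal{W}_t,\mathcal{Y}_t$ are bounded subsets of a metric space $(\mathcal{S},\eta)$, the $\mathcal{C}_t$ are bounded subsets of $\mathbb{R}_{\ge 0}$, the $h_t$ are Lipschitz and $L$-invertible, and the $d_t$ are Lipschitz. The memory is $M_t=(Y_{0:t},U_{0:t-1})\in\mathcal{M}_t:=\prod_{\ell=0}^t\mathcal{Y}_\ell\times\prod_{\ell=0}^{t-1}\mathcal{U}_\ell$.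 Strategy-independent ranges: for $m_t=(y_{0:t},u_{0:t-1})$ let $\mathcal{W}(m_t)$ be the set of $w_{0:t}\in\prod_{\ell=0}^t[[W_\ell]]$ with $y_0=h_0(w_0)$ and $y_\ell=h_\ell(w_{0:\ell-1},u_{0:\ell-1})$ for $\ell=1,\dots,t$. Let $[[M_t]]$ be the set of such $m_t$ with $u_\ell\in[[U_\ell]]$ and $\mathcal{W}(m_t)\neq\emptyset$. For $m_t\in[[M_t]]$, $u_t\in[[U_t]]$: $[[C_t|m_t,u_t]]:=\{d_t(w_{0:t},u_{0:t}):w_{0:t}\in\mathcal{W}(m_t)\}$, $[[Y_{t+1}|m_t,u_t]]:=\{h_{t+1}(w_{0:t},u_{0:t}):w_{0:t}\in\mathcal{W}(m_t)\}$, $[[M_{t+1}|m_t,u_t]]:=\{(m_t,u_t,y_{t+1}):y_{t+1}\in[[Y_{t+1}|m_t,u_t]]\}$ (with the components rearranged as a memory). For functions $\sigma_t$ on $\mathcal{M}_t$ and $\Pi_t=\sigma_t(M_t)$: $[[\Pi_t]]:=\sigma_t([[M_t]])$, $[[M_t|\pi_t]]:=\{m_t\in[[M_t]]:\sigma_t(m_t)=\pi_t\}$, $[[\Pi_{t+1}|m_t,u_t]]:=\{\sigma_{t+1}(m_{t+1}):m_{t+1}\in[[M_{t+1}|m_t,u_t]]\}$, and for $Z\in\{C_t,Y_{t+1},\Pi_{t+1}\}$, $[[Z|\pi_t,u_t]]:=\bigcup_{m_t\in[[M_t|\pi_t]]}[[Z|m_t,u_t]]$. Memory-based DP: $V_{T+1}\equiv0$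 and for $t=T,\dots,0$, $Q_t(m_t,u_t):=\max\{\sup_{c\in[[C_t|m_t,u_t]]}c,\ \sup_{m_{t+1}\in[[M_{t+1}|m_t,u_t]]}V_{t+1}(m_{t+1})\}$, $V_t(m_t):=\inf_{u_t\in[[U_t]]}Q_t(m_t,u_t)$. Information state: $\Pi_t=\sigma_t(M_t)$ with $\sigma_t:\mathcal{M}_t\to\mathcal{P}_t$, $\mathcal{P}_t$ bounded, such that for all $t=0,\dots,T$, $m_t\in[[M_t]]$, $u_t\in[[U_t]]$: (i) $\sup_{c\in[[C_t|m_t,u_t]]}c=\sup_{c\in[[C_t|\sigma_t(m_t),u_t]]}c$; (ii) $[[\Pi_{t+1}|m_t,u_t]]=[[\Pi_{t+1}|\sigma_t(m_t),u_t]]$. Information-state DP: $\bar V_{T+1}\equiv0$ and for $\pi_t\in[[\Pi_t]]$, $u_t\in[[U_t]]$: $\bar Q_t(\pi_t,u_t):=\max\{\sup_{c\in[[C_t|\pi_t,u_t]]}c,\ \sup_{\pi_{t+1}\in[[\Pi_{t+1}|\pi_t,u_t]]}\bar V_{t+1}(\pi_{t+1})\}$, $\bar V_t(\pi_t):=\inf_{u_t\in[[U_t]]}\bar Q_t(\pi_t,u_t)$. *)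

theory Defs
  imports "HOL-Analysis.Analysis"
begin

text \<open>
All of \<open>\<U>_t, \<W>_t, \<Y>_t\<close> live in one metric space of type \<open>'s\<close>.
A tuple \<open>w_{0:t}\<close> is a list of length t+1.  A memory \<open>m_t = (y_{0:t}, u_{0:t-1})\<close>
is a pair of lists \<open>(ys, us)\<close> with \<open>length ys = t+1\<close>, \<open>length us = t\<close>.
Parameters:
  Wr l   = marginal range [[W_l]],
  Ur t   = the given set [[U_t]],
  h0     = observation map h_0 (Y_0 = h0 W_0),
  h l    = observation map h_l for l >= 1, applied to (w_{0:l-1}, u_{0:l-1}),
  d t    = cost map d_t, applied to (w_{0:t}, u_{0:t}).
\<close>

type_synonym 's memory = "'s list \<times> 's list"

definition Wset ::
  "(nat \<Rightarrow> 's set) \<Rightarrow> ('s \<Rightarrow> 's) \<Rightarrow> (nat \<Rightarrow> 's list \<Rightarrow> 's list \<Rightarrow> 's)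
   \<Rightarrow> nat \<Rightarrow> 's memory \<Rightarrow> 's list set" where
  "Wset Wr h0 h t m =
     {ws. length ws = Suc t \<and> (\<forall>l\<le>t. ws ! l \<in> Wr l)
        \<and> fst m ! 0 = h0 (ws ! 0)
        \<and> (\<forall>l\<in>{1..t}. fst m ! l = h l (take l ws) (take l (snd m)))}"

definition Mrange ::
  "(nat \<Rightarrow> 's set) \<Rightarrow> (nat \<Rightarrow> 's set) \<Rightarrow> ('s \<Rightarrow> 's) \<Rightarrow> (nat \<Rightarrow> 's list \<Rightarrow> 's list \<Rightarrow> 's)
   \<Rightarrow> nat \<Rightarrow> 's memory set" where
  "Mrange Wr Ur h0 h t =
     {m. length (fst m) = Suc t \<and> length (snd m) = t \<and> (\<forall>l<t. snd m ! l \<in> Ur l)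
        \<and> Wset Wr h0 h t m \<noteq> {}}"

definition Crange ::
  "(nat \<Rightarrow> 's set) \<Rightarrow> ('s \<Rightarrow> 's) \<Rightarrow> (nat \<Rightarrow> 's list \<Rightarrow> 's list \<Rightarrow> 's)
   \<Rightarrow> (nat \<Rightarrow> 's list \<Rightarrow> 's list \<Rightarrow> real) \<Rightarrow> nat \<Rightarrow> 's memory \<Rightarrow> 's \<Rightarrow> real set" where
  "Crange Wr h0 h d t m u = (\<lambda>ws. d t ws (snd m @ [u])) ` Wset Wr h0 h t m"

definition Yrange ::
  "(nat \<Rightarrow> 's set) \<Rightarrow> ('s \<Rightarrow> 's) \<Rightarrow> (nat \<Rightarrow> 's list \<Rightarrow> 's list \<Rightarrow> 's)
   \<Rightarrow> nat \<Rightarrow> 's memory \<Rightarrow> 's \<Rightarrow> 's set" where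
  "Yrange Wr h0 h t m u = (\<lambda>ws. h (Suc t) ws (snd m @ [u])) ` Wset Wr h0 h t m"

definition Mnext ::
  "(nat \<Rightarrow> 's set) \<Rightarrow> ('s \<Rightarrow> 's) \<Rightarrow> (nat \<Rightarrow> 's list \<Rightarrow> 's list \<Rightarrow> 's)
   \<Rightarrow> nat \<Rightarrow> 's memory \<Rightarrow> 's \<Rightarrow> 's memory set" where
  "Mnext Wr h0 h t m u = (\<lambda>y. (fst m @ [y], snd m @ [u])) ` Yrange Wr h0 h t m u"

text \<open>Memory-based DP.  \<open>Vaux k t\<close> is \<open>V_t\<close> when \<open>k = T + 1 - t\<close>.\<close>

fun Vaux ::
  "(nat \<Rightarrow> 's set) \<Rightarrow> (nat \<Rightarrow> 's set) \<Rightarrow> ('s \<Rightarrow> 's) \<Rightarrow> (nat \<Rightarrow> 's list \<Rightarrow> 's list \<Rightarrow> 's)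
   \<Rightarrow> (nat \<Rightarrow> 's list \<Rightarrow> 's list \<Rightarrow> real) \<Rightarrow> nat \<Rightarrow> nat \<Rightarrow> 's memory \<Rightarrow> real" where
  "Vaux Wr Ur h0 h d 0 t m = 0"
| "Vaux Wr Ur h0 h d (Suc k) t m =
     (INF u\<in>Ur t. max (Sup (Crange Wr h0 h d t m u))
                       (Sup (Vaux Wr Ur h0 h d k (Suc t) ` Mnext Wr h0 h t m u)))"

definition Vmem ::
  "(nat \<Rightarrow> 's set) \<Rightarrow> (nat \<Rightarrow> 's set) \<Rightarrow> ('s \<Rightarrow> 's) \<Rightarrow> (nat \<Rightarrow> 's list \<Rightarrow> 's list \<Rightarrow> 's)
   \<Rightarrow> (nat \<Rightarrow> 's list \<Rightarrow> 's list \<Rightarrow> real) \<Rightarrow> nat \<Rightarrow> nat \<Rightarrow> 's memory \<Rightarrow> real" where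
  "Vmem Wr Ur h0 h d T t m = (if t \<le> T then Vaux Wr Ur h0 h d (Suc T - t) t m else 0)"

definition Qmem ::
  "(nat \<Rightarrow> 's set) \<Rightarrow> (nat \<Rightarrow> 's set) \<Rightarrow> ('s \<Rightarrow> 's) \<Rightarrow> (nat \<Rightarrow> 's list \<Rightarrow> 's list \<Rightarrow> 's)
   \<Rightarrow> (nat \<Rightarrow> 's list \<Rightarrow> 's list \<Rightarrow> real) \<Rightarrow> nat \<Rightarrow> nat \<Rightarrow> 's memory \<Rightarrow> 's \<Rightarrow> real" where
  "Qmem Wr Ur h0 h d T t m u =
     max (Sup (Crange Wr h0 h d t m u))
         (Sup (Vmem Wr Ur h0 h d T (Suc t) ` Mnext Wr h0 h t m u))"

definition Pirange where
  "Pirange Wr Ur h0 h \<sigma> t = \<sigma> t ` Mrange Wr Ur h0 h t"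

definition Mfib where
  "Mfib Wr Ur h0 h \<sigma> t p = {m \<in> Mrange Wr Ur h0 h t. \<sigma> t m = p}"

definition PiNext where
  "PiNext Wr h0 h \<sigma> t m u = \<sigma> (Suc t) ` Mnext Wr h0 h t m u"

definition Cpi where
  "Cpi Wr Ur h0 h d \<sigma> t p u = (\<Union>m\<in>Mfib Wr Ur h0 h \<sigma> t p. Crange Wr h0 h d t m u)"

definition Ypi where
  "Ypi Wr Ur h0 h \<sigma> t p u = (\<Union>m\<in>Mfib Wr Ur h0 h \<sigma> t p. Yrange Wr h0 h t m u)"

definition PiNextpi where
  "PiNextpi Wr Ur h0 h \<sigma> t p u = (\<Union>m\<in>Mfib Wr Ur h0 h \<sigma> t p. PiNext Wr h0 h \<sigma> t m u)"

definition Mspace :: "(nat \<Rightarrow> 's set) \<Rightarrow> (nat \<Rightarrow> 's set) \<Rightarrow> nat \<Rightarrow> 's memory set" where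
  "Mspace Ys Us t =
     {m. length (fst m) = Suc t \<and> length (snd m) = t
        \<and> (\<forall>l\<le>t. fst m ! l \<in> Ys l) \<and> (\<forall>l<t. snd m ! l \<in> Us l)}"

text \<open>Information state (conditions (i), (ii)), with \<open>\<sigma>_t : \<M>_t \<rightarrow> \<P>_t\<close>, \<open>\<P>_t\<close> bounded.\<close>

definition is_info_state where
  "is_info_state Wr Ur h0 h d Ys Us P \<sigma> T \<longleftrightarrow>
     (\<forall>t\<le>T. bounded (P t) \<and> (\<forall>m\<in>Mspace Ys Us t. \<sigma> t m \<in> P t)
       \<and> (\<forall>m\<in>Mrange Wr Ur h0 h t. \<forall>u\<in>Ur t.
            Sup (Crange Wr h0 h d t m u) = Sup (Cpi Wr Ur h0 h d \<sigma> t (\<sigma> t m) u)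
          \<and> PiNext Wr h0 h \<sigma> t m u = PiNextpi Wr Ur h0 h \<sigma> t (\<sigma> t m) u))"

text \<open>Information-state DP.  \<open>Vbaraux k t\<close> is \<open>\<bar>V>_t\<close> when \<open>k = T + 1 - t\<close>.\<close>

fun Vbaraux where
  "Vbaraux Wr Ur h0 h d \<sigma> 0 t p = (0::real)"
| "Vbaraux Wr Ur h0 h d \<sigma> (Suc k) t p =
     (INF u\<in>Ur t. max (Sup (Cpi Wr Ur h0 h d \<sigma> t p u))
                       (Sup (Vbaraux Wr Ur h0 h d \<sigma> k (Suc t) ` PiNextpi Wr Ur h0 h \<sigma> t p u)))"

definition Vbar where
  "Vbar Wr Ur h0 h d \<sigma> T t p = (if t \<le> T then Vbaraux Wr Ur h0 h d \<sigma> (Suc T - t) t p else 0)"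

definition Qbar where
  "Qbar Wr Ur h0 h d \<sigma> T t p u =
     max (Sup (Cpi Wr Ur h0 h d \<sigma> t p u))
         (Sup (Vbar Wr Ur h0 h d \<sigma> T (Suc t) ` PiNextpi Wr Ur h0 h \<sigma> t p u))"

end

theory Submission
  imports Defs
begin

text \<open>
Both value functions vanish at T + 1.  If
V_{t+1} = Vbar_{t+1} \<circ> \<sigma>_{t+1} on [[M_{t+1}]], then, since every successor memory of an
admissible memory is again admissible, the values of V_{t+1} over the successors of
(m_t, u_t) are the values of Vbar_{t+1} over [[\<Pi>_{t+1} | m_t, u_t]], which by (ii) is
[[\<Pi>_{t+1} | \<sigma>_t(m_t), u_t]]; together with (i) for the cost term this gives
Q_t = Qbar_t \<circ> \<sigma>_t, and taking the infimum over u_t gives the claim for V_t.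
\<close>

lemma Mnext_subset_Mrange:
  assumes m: "m \<in> Mrange Wr Ur h0 h t" and u: "u \<in> Ur t" and ne: "Wr (Suc t) \<noteq> {}"
  shows "Mnext Wr h0 h t m u \<subseteq> Mrange Wr Ur h0 h (Suc t)"
proof
  fix m' assume "m' \<in> Mnext Wr h0 h t m u"
  then obtain ws where ws: "ws \<in> Wset Wr h0 h t m"
    and m': "m' = (fst m @ [h (Suc t) ws (snd m @ [u])], snd m @ [u])"
    unfolding Mnext_def Yrange_def by auto
  obtain w where w: "w \<in> Wr (Suc t)" using ne by auto
  have len: "length (fst m) = Suc t" "length (snd m) = t" "length ws = Suc t"
    using m ws unfolding Mrange_def Wset_def by auto
  have "ws @ [w] \<in> Wset Wr h0 h (Suc t) m'"
    using ws w len unfolding Wset_def m'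
    by (auto simp: nth_append le_Suc_eq)
  then show "m' \<in> Mrange Wr Ur h0 h (Suc t)"
    using m u len unfolding Mrange_def m' by (auto simp: nth_append less_Suc_eq)
qed

lemma Wr_0_nonempty_if_Mrange:
  assumes "m \<in> Mrange Wr Ur h0 h t"
  shows "Wr 0 \<noteq> {}"
proof -
  obtain ws where "ws \<in> Wset Wr h0 h t m"
    using assms unfolding Mrange_def by auto
  then have "ws ! 0 \<in> Wr 0"
    unfolding Wset_def by auto
  then show ?thesis by auto
qed

lemma Vmem_after_horizon [simp]: "Vmem Wr Ur h0 h d T (Suc T) m = 0"
  by (simp add: Vmem_def)

lemma Vbar_after_horizon [simp]: "Vbar Wr Ur h0 h d \<sigma> T (Suc T) p = 0"
  by (simp add: Vbar_def)

lemma Vmem_eq_INF_Qmem: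
  assumes "t \<le> T"
  shows "Vmem Wr Ur h0 h d T t m = (INF u\<in>Ur t. Qmem Wr Ur h0 h d T t m u)"
proof -
  have "Vaux Wr Ur h0 h d (T - t) (Suc t) = Vmem Wr Ur h0 h d T (Suc t)"
    using assms by (auto simp: Vmem_def fun_eq_iff le_Suc_eq)
  moreover have "Suc T - t = Suc (T - t)"
    using assms by simp
  ultimately show ?thesis
    using assms by (simp add: Vmem_def[of _ _ _ _ _ _ t] Qmem_def)
qed

lemma Vbar_eq_INF_Qbar:
  assumes "t \<le> T"
  shows "Vbar Wr Ur h0 h d \<sigma> T t p = (INF u\<in>Ur t. Qbar Wr Ur h0 h d \<sigma> T t p u)"
proof -
  have "Vbaraux Wr Ur h0 h d \<sigma> (T - t) (Suc t) = Vbar Wr Ur h0 h d \<sigma> T (Suc t)"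
    using assms by (auto simp: Vbar_def fun_eq_iff le_Suc_eq)
  moreover have "Suc T - t = Suc (T - t)"
    using assms by simp
  ultimately show ?thesis
    using assms by (simp add: Vbar_def[of _ _ _ _ _ _ _ t] Qbar_def)
qed

lemma Qmem_eq_Qbar_if_Vmem_eq_Vbar_Suc:
  assumes info: "is_info_state Wr Ur h0 h d Ys Us P \<sigma> T"
    and t: "t \<le> T" and m: "m \<in> Mrange Wr Ur h0 h t" and u: "u \<in> Ur t"
    and ne: "Wr (Suc t) \<noteq> {}"
    and V_Suc: "\<And>m'. m' \<in> Mrange Wr Ur h0 h (Suc t) \<Longrightarrow>
      Vmem Wr Ur h0 h d T (Suc t) m' = Vbar Wr Ur h0 h d \<sigma> T (Suc t) (\<sigma> (Suc t) m')"
  shows "Qmem Wr Ur h0 h d T t m u = Qbar Wr Ur h0 h d \<sigma> T t (\<sigma> t m) u"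
proof -
  have cost: "Sup (Crange Wr h0 h d t m u) = Sup (Cpi Wr Ur h0 h d \<sigma> t (\<sigma> t m) u)"
    and next_states: "PiNext Wr h0 h \<sigma> t m u = PiNextpi Wr Ur h0 h \<sigma> t (\<sigma> t m) u"
    using info t m u unfolding is_info_state_def by auto
  have "Vmem Wr Ur h0 h d T (Suc t) ` Mnext Wr h0 h t m u
        = Vbar Wr Ur h0 h d \<sigma> T (Suc t) ` PiNext Wr h0 h \<sigma> t m u"
    using Mnext_subset_Mrange[OF m u ne] V_Suc
    unfolding PiNext_def image_image by (auto intro!: image_cong)
  then show ?thesis
    unfolding Qmem_def Qbar_def cost next_states by simp
qed

lemma Vmem_eq_Vbar:
  assumes info: "is_info_state Wr Ur h0 h d Ys Us P \<sigma> T"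
    and ne: "\<And>l. Wr l \<noteq> {}"
    and t: "t \<le> Suc T"
  shows "\<forall>m\<in>Mrange Wr Ur h0 h t.
    Vmem Wr Ur h0 h d T t m = Vbar Wr Ur h0 h d \<sigma> T t (\<sigma> t m)"
  using t
proof (induction rule: inc_induct)
  case base
  show ?case by simp
next
  case (step t)
  then have t: "t \<le> T" by simp
  have "Qmem Wr Ur h0 h d T t m u = Qbar Wr Ur h0 h d \<sigma> T t (\<sigma> t m) u"
    if "m \<in> Mrange Wr Ur h0 h t" "u \<in> Ur t" for m u
    using Qmem_eq_Qbar_if_Vmem_eq_Vbar_Suc[OF info t that ne] step.IH by blast
  then show ?case
    by (simp add: Vmem_eq_INF_Qmem[OF t] Vbar_eq_INF_Qbar[OF t])
qed

lemma Qmem_eq_Qbar: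
  assumes info: "is_info_state Wr Ur h0 h d Ys Us P \<sigma> T"
    and ne: "\<And>l. Wr l \<noteq> {}"
    and t: "t \<le> T" and m: "m \<in> Mrange Wr Ur h0 h t" and u: "u \<in> Ur t"
  shows "Qmem Wr Ur h0 h d T t m u = Qbar Wr Ur h0 h d \<sigma> T t (\<sigma> t m) u"
  using Qmem_eq_Qbar_if_Vmem_eq_Vbar_Suc[OF info t m u ne]
    Vmem_eq_Vbar[OF info ne, of "Suc t"] t by blast
theorem theorem1:
  fixes \<Omega> :: "'o set"
    and W :: "nat \<Rightarrow> 'o \<Rightarrow> 's::metric_space"
    and Ws Us Ys Ur :: "nat \<Rightarrow> 's set"
    and Cs :: "nat \<Rightarrow> real set"
    and h0 :: "'s \<Rightarrow> 's"
    and h :: "nat \<Rightarrow> 's list \<Rightarrow> 's list \<Rightarrow> 's"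
    and d :: "nat \<Rightarrow> 's list \<Rightarrow> 's list \<Rightarrow> real"
    and P :: "nat \<Rightarrow> 'p::metric_space set"
    and \<sigma> :: "nat \<Rightarrow> 's list \<times> 's list \<Rightarrow> 'p"
    and T :: nat
  assumes indep: "(\<lambda>\<omega>. map (\<lambda>l. W l \<omega>) [0..<Suc T]) ` \<Omega>
                   = listset (map (\<lambda>l. W l ` \<Omega>) [0..<Suc T])"
    and W_in: "\<And>l \<omega>. l \<le> T \<Longrightarrow> \<omega> \<in> \<Omega> \<Longrightarrow> W l \<omega> \<in> Ws l"
    and U_in: "\<And>t. t \<le> T \<Longrightarrow> Ur t \<subseteq> Us t"
    and bdd_sets: "\<And>t. t \<le> Suc T \<Longrightarrow> bounded (Ws t) \<and> bounded (Us t) \<and> bounded (Ys t)"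
    and C_sets: "\<And>t. t \<le> T \<Longrightarrow> bounded (Cs t) \<and> Cs t \<subseteq> {0..}"
    and h0_in: "\<And>w. w \<in> Ws 0 \<Longrightarrow> h0 w \<in> Ys 0"
    and h_in: "\<And>t ws us. t \<le> T \<Longrightarrow> length ws = Suc t \<Longrightarrow> length us = Suc t
                 \<Longrightarrow> (\<forall>l\<le>t. ws ! l \<in> Ws l \<and> us ! l \<in> Us l)
                 \<Longrightarrow> h (Suc t) ws us \<in> Ys (Suc t)"
    and d_in: "\<And>t ws us. t \<le> T \<Longrightarrow> length ws = Suc t \<Longrightarrow> length us = Suc t
                 \<Longrightarrow> (\<forall>l\<le>t. ws ! l \<in> Ws l \<and> us ! l \<in> Us l)
                 \<Longrightarrow> d t ws us \<in> Cs t"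
    and P_bdd: "bounded (P (Suc T))"
    and \<sigma>_last: "\<And>m. m \<in> Mspace Ys Us (Suc T) \<Longrightarrow> \<sigma> (Suc T) m \<in> P (Suc T)"
    and info: "is_info_state (\<lambda>l. W l ` \<Omega>) Ur h0 h d Ys Us P \<sigma> T"
  shows "\<forall>t\<le>T. \<forall>m\<in>Mrange (\<lambda>l. W l ` \<Omega>) Ur h0 h t. \<forall>u\<in>Ur t.
           Qmem (\<lambda>l. W l ` \<Omega>) Ur h0 h d T t m u
             = Qbar (\<lambda>l. W l ` \<Omega>) Ur h0 h d \<sigma> T t (\<sigma> t m) u
         \<and> Vmem (\<lambda>l. W l ` \<Omega>) Ur h0 h d T t m
             = Vbar (\<lambda>l. W l ` \<Omega>) Ur h0 h d \<sigma> T t (\<sigma> t m)"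
proof (cases "\<Omega> = {}")
  case True
  then show ?thesis
    using Wr_0_nonempty_if_Mrange by fastforce
next
  case False
  then have ne: "\<And>l. W l ` \<Omega> \<noteq> {}"
    by simp
  show ?thesis
    using Qmem_eq_Qbar[OF info ne] Vmem_eq_Vbar[OF info ne] by simp
qed

end
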